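(* (1) (Modified LU decomposition) If $A$ is a complex $m\times m$ matrix with $\det(A^{(k)})\ne0$ for $k=1,\dots,m$ and $\det(\hat A^{(k)})\ne0$ for $k=1,\dots,m-1$, then there exist a unique lower triangular matrix $B$ and a unique upper triangular matrix $C$ with first diagonal entry $1$ and remaining first-row entries $0$ such that $A=B\cdot K\cdot C$, where $K$ is the $m\times m$ matrix with entries $1$ on the diagonal and on the superdiagonal and $0$ elsewhere. (2) (Modified Cholesky factorization for $(m-1)\times m$ matrices) If $A$ is a complex $(m-1)\times m$ matrix with $\det(A^{(k)})\ne0$ for $k=1,\dots,m-1$ and $\det(\hat A^{(k)})\ne0$ for $k=1,\dots,m-1$, then there exist a unique $(m-1)\times(m-1)$ lower triangular matrix $B$ and a unique $m\times m$ upper triangular matrix $C$ with first diagonal entry $1$ and remaining first-row entries $0$ such that $A=B\cdot K'\cdot C$, where $K'$ is the $(m-1)\times m$ matrix with entries $1$ in positions $(i,i)$ and $(i,i+1)$ for $i=1,\dots,m-1$ and $0$ elsewhere.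
   Context: For a matrix $A$, $A^{(k)}$ denotes its upper left $k\times k$ submatrix; $\hat A$ denotes the matrix obtained from $A$ by deleting its first column, and $\hat A^{(k)}$ the upper left $k\times k$ submatrix of $\hat A$. *)

theory Defs
  imports Complex_Main "Jordan_Normal_Form.Determinant"
begin

definition lead_sub :: "'a mat \<Rightarrow> nat \<Rightarrow> 'a mat" where
  "lead_sub A k = mat k k (\<lambda>(i,j). A $$ (i,j))"

definition drop_first_col :: "'a mat \<Rightarrow> 'a mat" where
  "drop_first_col A = mat (dim_row A) (dim_col A - 1) (\<lambda>(i,j). A $$ (i, Suc j))"

definition lower_triangular :: "'a::zero mat \<Rightarrow> bool" where
  "lower_triangular A \<longleftrightarrow> (\<forall>i < dim_row A. \<forall>j < dim_col A. i < j \<longrightarrow> A $$ (i,j) = 0)"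

definition Kmat :: "nat \<Rightarrow> nat \<Rightarrow> 'a::{zero,one} mat" where
  "Kmat r c = mat r c (\<lambda>(i,j). if j = i \<or> j = Suc i then 1 else 0)"

end

theory Submission
  imports Defs
begin

text \<open>The factorization is built by induction on the size, alternately appending a row and a
  column to \<open>A\<close>: from \<open>r \<times> (r+1)\<close> to \<open>(r+1) \<times> (r+1)\<close> to \<open>(r+1) \<times> (r+2)\<close>.

  Appending a row: the first \<open>r\<close> rows of \<open>A = B * K * C\<close> only involve the first \<open>r\<close> rows of
  the lower triangular \<open>B\<close>, so \<open>C\<close> and the leading block of \<open>B\<close> are forced by the smaller
  problem, and the new row \<open>x\<close> of \<open>B\<close> must solve \<open>x * (K * C) = row A r\<close>. This system is
  uniquely solvable since \<open>det (K * C) = det C\<close>, and \<open>det C \<noteq> 0\<close> because deleting the first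
  column of \<open>A = B * K' * C\<close> leaves \<open>B * L * C'\<close>, where \<open>L\<close> is lower bidiagonal and \<open>C'\<close> is
  \<open>C\<close> without its first row and column.

  Appending a column: the first \<open>r\<close> columns of \<open>A\<close> only involve the leading block of the
  upper triangular \<open>C\<close>, so \<open>B\<close> and that block are forced by \<open>lead_sub A r\<close>, and the new
  column \<open>y\<close> of \<open>C\<close> below its zero top entry must solve \<open>(B * L) * y = col A r\<close>, where
  \<open>det B \<noteq> 0\<close> because \<open>det (lead_sub A r) = det B * det C\<close>.\<close>

lemma index_mult_mat_sum:
  assumes "A \<in> carrier_mat n p" "B \<in> carrier_mat p q" "i < n" "j < q"
  shows "(A * B) $$ (i,j) = (\<Sum>l<p. A $$ (i,l) * B $$ (l,j))"
  using assms by (simp add: scalar_prod_def lessThan_atLeast0)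

lemma index_mult_mat_vec_sum:
  assumes "A \<in> carrier_mat n p" "v \<in> carrier_vec p" "i < n"
  shows "(A *\<^sub>v v) $ i = (\<Sum>l<p. A $$ (i,l) * v $ l)"
  using assms by (simp add: scalar_prod_def lessThan_atLeast0)

lemma mult_mat_vec_unique_solution:
  fixes M :: "'a::field mat"
  assumes M: "M \<in> carrier_mat n n" and "det M \<noteq> 0" and b: "b \<in> carrier_vec n"
  obtains x where "x \<in> carrier_vec n" and "M *\<^sub>v x = b"
    and "\<And>x'. x' \<in> carrier_vec n \<Longrightarrow> M *\<^sub>v x' = b \<Longrightarrow> x' = x"
proof -
  obtain M' where M': "M' \<in> carrier_mat n n" "M * M' = 1\<^sub>m n" "M' * M = 1\<^sub>m n"
    using det_non_zero_imp_unit[OF assms(1,2), of "()"] unfolding Units_def ring_mat_def by auto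
  show ?thesis
  proof (rule that)
    show "M' *\<^sub>v b \<in> carrier_vec n" using M' b by simp
    show "M *\<^sub>v (M' *\<^sub>v b) = b" using M M' b by (simp flip: assoc_mult_mat_vec)
  next
    fix x assume x: "x \<in> carrier_vec n" "M *\<^sub>v x = b"
    have "x = (M' * M) *\<^sub>v x" using M' x by simp
    also have "\<dots> = M' *\<^sub>v (M *\<^sub>v x)" by (rule assoc_mult_mat_vec) (use M M' x in auto)
    also have "\<dots> = M' *\<^sub>v b" using x by simp
    finally show "x = M' *\<^sub>v b" .
  qed
qed

lemma upper_triangular_mat_delete_00:
  assumes "upper_triangular C" "C \<in> carrier_mat (Suc n) (Suc n)"
  shows "upper_triangular (mat_delete C 0 0)"
  using assms by (auto simp: mat_delete_def upper_triangular_def)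

lemma det_upper_triangular_mat_delete_00:
  fixes C :: "'a::comm_ring_1 mat"
  assumes C: "C \<in> carrier_mat (Suc n) (Suc n)" and uC: "upper_triangular C"
  shows "det C = C $$ (0,0) * det (mat_delete C 0 0)"
proof -
  have D: "mat_delete C 0 0 \<in> carrier_mat n n" using mat_delete_carrier[OF C] by simp
  have "det C = (\<Prod>i<Suc n. C $$ (i,i))"
    using det_upper_triangular[OF uC C] C by (simp add: prod_list_diag_prod atLeast0LessThan)
  also have "\<dots> = C $$ (0,0) * (\<Prod>i<n. C $$ (Suc i, Suc i))"
    by (simp only: prod.lessThan_Suc_shift)
  also have "(\<Prod>i<n. C $$ (Suc i, Suc i)) = det (mat_delete C 0 0)"
    using det_upper_triangular[OF upper_triangular_mat_delete_00[OF uC C] D] D C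
    by (simp add: prod_list_diag_prod atLeast0LessThan mat_delete_def)
  finally show ?thesis .
qed

section \<open>The bidiagonal matrices\<close>

lemma Kmat_carrier[simp]: "Kmat r c \<in> carrier_mat r c"
  by (simp add: Kmat_def)

lemma Kmat_dim: "dim_row (Kmat r c) = r" "dim_col (Kmat r c) = c"
  by (simp_all add: Kmat_def)

lemma det_Kmat: "det (Kmat n n :: 'a::comm_ring_1 mat) = 1"
proof -
  have "det (Kmat n n :: 'a mat) = prod_list (diag_mat (Kmat n n))"
    by (rule det_upper_triangular[OF _ Kmat_carrier]) (auto simp: Kmat_def)
  thus ?thesis by (simp add: prod_list_diag_prod Kmat_def)
qed

lemma det_Kmat_mult:
  fixes C :: "'a::comm_ring_1 mat"
  assumes C: "C \<in> carrier_mat n n"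
  shows "det (Kmat n n * C) = det C"
  using det_mult[OF Kmat_carrier C] by (simp add: det_Kmat)

lemma Kmat_mult_index:
  fixes C :: "'a::semiring_1 mat"
  assumes C: "C \<in> carrier_mat c c" and "i < r" "i < c" "j < c"
  shows "(Kmat r c * C) $$ (i,j) = C $$ (i,j) + (if Suc i < c then C $$ (Suc i, j) else 0)"
proof -
  have "(Kmat r c * C) $$ (i,j) = (\<Sum>l<c. Kmat r c $$ (i,l) * C $$ (l,j))"
    using assms by (simp add: index_mult_mat_sum[OF Kmat_carrier C])
  also have "\<dots> = (\<Sum>l<c. (if l = i then C $$ (l,j) else 0) + (if l = Suc i then C $$ (l,j) else 0))"
    using assms by (intro sum.cong) (auto simp: Kmat_def)
  also have "\<dots> = C $$ (i,j) + (if Suc i < c then C $$ (Suc i, j) else 0)"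
    using assms by (simp add: sum.distrib)
  finally show ?thesis .
qed

definition lower_bidiag :: "nat \<Rightarrow> 'a::{zero,one} mat" where
  "lower_bidiag n = mat n n (\<lambda>(i,j). if j = i \<or> Suc j = i then 1 else 0)"

lemma lower_bidiag_carrier[simp]: "lower_bidiag n \<in> carrier_mat n n"
  by (simp add: lower_bidiag_def)

lemma det_lower_bidiag: "det (lower_bidiag n :: 'a::comm_ring_1 mat) = 1"
proof -
  have "det (lower_bidiag n :: 'a mat) = prod_list (diag_mat (lower_bidiag n))"
    by (rule det_lower_triangular[of n]) (auto simp: lower_bidiag_def)
  thus ?thesis by (simp add: prod_list_diag_prod lower_bidiag_def)
qed

lemma lower_bidiag_mult_vec_index:
  fixes y :: "'a::semiring_1 vec"
  assumes "y \<in> carrier_vec n" "l < n"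
  shows "(lower_bidiag n *\<^sub>v y) $ l = y $ l + (if l = 0 then 0 else y $ (l - 1))"
proof -
  have "(lower_bidiag n *\<^sub>v y) $ l = (\<Sum>p<n. lower_bidiag n $$ (l,p) * y $ p)"
    using assms by (simp add: index_mult_mat_vec_sum[OF lower_bidiag_carrier])
  also have "\<dots> = (\<Sum>p<n. (if p = l then y $ p else 0) + (if l \<noteq> 0 \<and> p = l - 1 then y $ p else 0))"
    using assms by (intro sum.cong) (auto simp: lower_bidiag_def)
  also have "\<dots> = y $ l + (if l = 0 then 0 else y $ (l - 1))"
    using assms by (cases l) (simp_all add: sum.distrib)
  finally show ?thesis .
qed

section \<open>The modified LU factorization\<close>

definition modified_LU :: "nat \<Rightarrow> nat \<Rightarrow> 'a::semiring_1 mat \<Rightarrow> 'a mat \<Rightarrow> 'a mat \<Rightarrow> bool" where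
  "modified_LU r c A B C \<longleftrightarrow> B \<in> carrier_mat r r \<and> lower_triangular B
     \<and> C \<in> carrier_mat c c \<and> upper_triangular C
     \<and> C $$ (0,0) = 1 \<and> (\<forall>j\<in>{1..<c}. C $$ (0,j) = 0)
     \<and> A = B * Kmat r c * C"

lemma modified_LU_carrier: "modified_LU r c A B C \<Longrightarrow> A \<in> carrier_mat r c"
  unfolding modified_LU_def by (metis Kmat_carrier mult_carrier_mat)

definition unique_modified_LU :: "nat \<Rightarrow> nat \<Rightarrow> 'a::semiring_1 mat \<Rightarrow> bool" where
  "unique_modified_LU r c A \<longleftrightarrow>
     (\<exists>B C. modified_LU r c A B C \<and> (\<forall>B' C'. modified_LU r c A B' C' \<longrightarrow> B' = B \<and> C' = C))"

definition leading_minors_nonzero :: "nat \<Rightarrow> nat \<Rightarrow> 'a::comm_ring_1 mat \<Rightarrow> bool" where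
  "leading_minors_nonzero r c A \<longleftrightarrow> A \<in> carrier_mat r c
     \<and> (\<forall>k\<in>{1..r}. det (lead_sub A k) \<noteq> 0)
     \<and> (\<forall>k\<in>{1..c-1}. det (lead_sub (drop_first_col A) k) \<noteq> 0)"

lemma unique_modified_LU_iff_ex1:
  "unique_modified_LU r c A \<longleftrightarrow> (\<exists>!BC. case BC of (B, C) \<Rightarrow> modified_LU r c A B C)"
  unfolding unique_modified_LU_def by (auto intro!: ex1I) (metis (lifting) case_prod_conv prod.inject)

lemma unique_modified_LUE:
  assumes "unique_modified_LU r c A"
  obtains B C where "modified_LU r c A B C"
    and "\<And>B' C'. modified_LU r c A B' C' \<Longrightarrow> B' = B \<and> C' = C"
  using assms unfolding unique_modified_LU_def by auto

lemma eq_mult_Kmat_iff: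
  fixes A :: "'a::semiring_1 mat"
  assumes A: "A \<in> carrier_mat r c" and B: "B \<in> carrier_mat r r" and C: "C \<in> carrier_mat c c"
  shows "A = B * Kmat r c * C \<longleftrightarrow>
    (\<forall>i<r. \<forall>j<c. A $$ (i,j) = (\<Sum>l<r. B $$ (i,l) * (Kmat r c * C) $$ (l,j)))"
proof -
  have KC: "Kmat r c * C \<in> carrier_mat r c" using mult_carrier_mat[OF Kmat_carrier C] .
  have "B * Kmat r c * C = B * (Kmat r c * C)" using B C by (simp add: assoc_mult_mat[of _ r r _ c])
  moreover have "A = B * (Kmat r c * C) \<longleftrightarrow>
      (\<forall>i<r. \<forall>j<c. A $$ (i,j) = (B * (Kmat r c * C)) $$ (i,j))"
    using A B KC by (auto intro!: eq_matI)
  ultimately show ?thesis by (simp add: index_mult_mat_sum[OF B KC])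
qed

lemma det_modified_LU_square:
  fixes A :: "'a::comm_ring_1 mat"
  assumes "modified_LU n n A B C"
  shows "det A = det B * det C"
proof -
  from assms have B: "B \<in> carrier_mat n n" and C: "C \<in> carrier_mat n n"
    and A: "A = B * Kmat n n * C" by (auto simp: modified_LU_def)
  have "det A = det B * det (Kmat n n :: 'a mat) * det C"
    using det_mult[OF B Kmat_carrier] det_mult[OF mult_carrier_mat[OF B Kmat_carrier] C] A by simp
  thus ?thesis by (simp add: det_Kmat)
qed

lemma Kmat_mult_index_Suc_col:
  fixes C :: "'a::semiring_1 mat"
  assumes C: "C \<in> carrier_mat (Suc r) (Suc r)" and C0: "\<forall>j\<in>{1..<Suc r}. C $$ (0,j) = 0"
    and l: "l < r" and j: "j < r"
  shows "(Kmat r (Suc r) * C) $$ (l, Suc j) = (lower_bidiag r *\<^sub>v col (mat_delete C 0 0) j) $ l"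
  using assms by (cases l)
    (simp_all add: Kmat_mult_index lower_bidiag_mult_vec_index mat_delete_def add.commute)

lemma drop_first_col_modified_LU:
  fixes A :: "'a::comm_ring_1 mat"
  assumes s: "modified_LU r (Suc r) A B C"
  shows "drop_first_col A = B * (lower_bidiag r * mat_delete C 0 0)"
proof -
  from s have B: "B \<in> carrier_mat r r" and C: "C \<in> carrier_mat (Suc r) (Suc r)"
    and C0: "\<forall>j\<in>{1..<Suc r}. C $$ (0,j) = 0" and A: "A = B * Kmat r (Suc r) * C"
    by (auto simp: modified_LU_def)
  have Ac: "A \<in> carrier_mat r (Suc r)" using modified_LU_carrier[OF s] .
  have D: "mat_delete C 0 0 \<in> carrier_mat r r" using mat_delete_carrier[OF C] by simp
  have LD: "lower_bidiag r * mat_delete C 0 0 \<in> carrier_mat r r"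
    using mult_carrier_mat[OF lower_bidiag_carrier D] .
  show ?thesis
  proof (rule eq_matI)
    fix i j assume "i < dim_row (B * (lower_bidiag r * mat_delete C 0 0))"
      "j < dim_col (B * (lower_bidiag r * mat_delete C 0 0))"
    hence i: "i < r" and j: "j < r" using B LD by auto
    have "drop_first_col A $$ (i,j) = A $$ (i, Suc j)"
      using Ac i j by (simp add: drop_first_col_def)
    also have "\<dots> = (\<Sum>l<r. B $$ (i,l) * (Kmat r (Suc r) * C) $$ (l, Suc j))"
      using eq_mult_Kmat_iff[OF Ac B C] A i j by blast
    also have "\<dots> = (\<Sum>l<r. B $$ (i,l) * (lower_bidiag r * mat_delete C 0 0) $$ (l,j))"
      using j D by (intro sum.cong) (simp_all add: Kmat_mult_index_Suc_col[OF C C0] index_mult_mat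
        carrier_matD[OF lower_bidiag_carrier] carrier_matD[OF C])
    also have "\<dots> = (B * (lower_bidiag r * mat_delete C 0 0)) $$ (i,j)"
      using index_mult_mat_sum[OF B LD i j] ..
    finally show "drop_first_col A $$ (i,j) = (B * (lower_bidiag r * mat_delete C 0 0)) $$ (i,j)" .
  qed (use Ac B LD in \<open>auto simp: drop_first_col_def\<close>)
qed

lemma det_drop_first_col_modified_LU:
  fixes A :: "'a::comm_ring_1 mat"
  assumes s: "modified_LU r (Suc r) A B C"
  shows "det (drop_first_col A) = det B * det C"
proof -
  from s have B: "B \<in> carrier_mat r r" and C: "C \<in> carrier_mat (Suc r) (Suc r)"
    and uC: "upper_triangular C" and C00: "C $$ (0,0) = 1" by (auto simp: modified_LU_def)
  have D: "mat_delete C 0 0 \<in> carrier_mat r r" using mat_delete_carrier[OF C] by simp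
  show ?thesis
    using drop_first_col_modified_LU[OF s] det_mult[OF B mult_carrier_mat[OF lower_bidiag_carrier D]]
      det_mult[OF lower_bidiag_carrier D] det_upper_triangular_mat_delete_00[OF C uC] C00
    by (simp add: det_lower_bidiag)
qed

lemma lead_sub_id: "A \<in> carrier_mat n n \<Longrightarrow> lead_sub A n = A"
  by (auto simp: lead_sub_def)

lemma lead_sub_cong:
  assumes "\<And>i j. i < k \<Longrightarrow> j < k \<Longrightarrow> A $$ (i,j) = A' $$ (i,j)"
  shows "lead_sub A k = lead_sub A' k"
  using assms by (auto simp: lead_sub_def)

definition take_rows :: "nat \<Rightarrow> 'a mat \<Rightarrow> 'a mat" where
  "take_rows k A = mat k (dim_col A) (\<lambda>(i,j). A $$ (i,j))"

lemma leading_minors_nonzero_take_rows: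
  fixes A :: "'a::comm_ring_1 mat"
  assumes "leading_minors_nonzero (Suc r) (Suc r) A"
  shows "leading_minors_nonzero r (Suc r) (take_rows r A)"
proof -
  have A: "A \<in> carrier_mat (Suc r) (Suc r)" using assms by (simp add: leading_minors_nonzero_def)
  have "lead_sub (take_rows r A) k = lead_sub A k" if "k \<le> r" for k
    using that A by (intro lead_sub_cong) (simp add: take_rows_def)
  moreover have "lead_sub (drop_first_col (take_rows r A)) k = lead_sub (drop_first_col A) k"
    if "k \<le> r" for k
    using that A by (intro lead_sub_cong) (simp add: take_rows_def drop_first_col_def)
  ultimately show ?thesis
    using assms A by (auto simp: leading_minors_nonzero_def take_rows_def)
qed

lemma leading_minors_nonzero_lead_sub:
  fixes A :: "'a::comm_ring_1 mat"
  assumes "leading_minors_nonzero r (Suc r) A"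
  shows "leading_minors_nonzero r r (lead_sub A r)"
proof -
  have A: "A \<in> carrier_mat r (Suc r)" using assms by (simp add: leading_minors_nonzero_def)
  have "lead_sub (lead_sub A r) k = lead_sub A k" if "k \<le> r" for k
    using that by (intro lead_sub_cong) (simp add: lead_sub_def)
  moreover have "lead_sub (drop_first_col (lead_sub A r)) k = lead_sub (drop_first_col A) k"
    if "k < r" for k
    using that A by (intro lead_sub_cong) (simp add: lead_sub_def drop_first_col_def)
  ultimately show ?thesis
    using assms by (auto simp: leading_minors_nonzero_def lead_sub_def)
qed

lemma det_drop_first_col_nonzero:
  fixes A :: "'a::comm_ring_1 mat"
  assumes "leading_minors_nonzero r (Suc r) A"
  shows "det (drop_first_col A) \<noteq> 0"
proof -
  have D: "drop_first_col A \<in> carrier_mat r r"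
    using assms by (auto simp: leading_minors_nonzero_def drop_first_col_def)
  show ?thesis
  proof (cases r)
    case 0 thus ?thesis using D by simp
  next
    case (Suc r')
    hence "det (lead_sub (drop_first_col A) r) \<noteq> 0"
      using assms by (simp add: leading_minors_nonzero_def)
    thus ?thesis using lead_sub_id[OF D] by simp
  qed
qed

section \<open>Appending a row or a column\<close>

definition border_row :: "'a::zero mat \<Rightarrow> 'a vec \<Rightarrow> 'a mat" where
  "border_row B x = mat (Suc (dim_row B)) (Suc (dim_row B))
     (\<lambda>(i,j). if i < dim_row B then if j < dim_row B then B $$ (i,j) else 0 else x $ j)"

lemma border_row_carrier: "B \<in> carrier_mat r r \<Longrightarrow> border_row B x \<in> carrier_mat (Suc r) (Suc r)"
  by (simp add: border_row_def)

lemma lower_triangular_border_row_iff: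
  "B \<in> carrier_mat r r \<Longrightarrow> lower_triangular (border_row B x) \<longleftrightarrow> lower_triangular B"
  by (auto simp: lower_triangular_def border_row_def)

lemma border_row_lead_sub_row:
  assumes "B \<in> carrier_mat (Suc r) (Suc r)" and "lower_triangular B"
  shows "border_row (lead_sub B r) (row B r) = B"
  using assms by (intro eq_matI) (auto simp: border_row_def lead_sub_def lower_triangular_def less_Suc_eq)

lemma modified_LU_border_row_iff:
  fixes A :: "'a::comm_ring_1 mat"
  assumes A: "A \<in> carrier_mat (Suc r) (Suc r)" and B: "B \<in> carrier_mat r r"
    and x: "x \<in> carrier_vec (Suc r)"
  shows "modified_LU (Suc r) (Suc r) A (border_row B x) C \<longleftrightarrow>
    modified_LU r (Suc r) (take_rows r A) B C
    \<and> transpose_mat (Kmat (Suc r) (Suc r) * C) *\<^sub>v x = row A r"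
proof (cases "C \<in> carrier_mat (Suc r) (Suc r)")
  case False thus ?thesis by (simp add: modified_LU_def)
next
  case C: True
  have At: "take_rows r A \<in> carrier_mat r (Suc r)" using A by (simp add: take_rows_def)
  have bB: "border_row B x \<in> carrier_mat (Suc r) (Suc r)" using border_row_carrier[OF B] .
  have top: "(\<Sum>l<Suc r. border_row B x $$ (i,l) * (Kmat (Suc r) (Suc r) * C) $$ (l,j))
      = (\<Sum>l<r. B $$ (i,l) * (Kmat r (Suc r) * C) $$ (l,j))" if "i < r" "j < Suc r" for i j
    using that B C by (simp add: border_row_def Kmat_mult_index)
  have bottom: "(\<Sum>l<Suc r. border_row B x $$ (r,l) * (Kmat (Suc r) (Suc r) * C) $$ (l,j))
      = (transpose_mat (Kmat (Suc r) (Suc r) * C) *\<^sub>v x) $ j" if "j < Suc r" for j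
  proof -
    have KC: "Kmat (Suc r) (Suc r) * C \<in> carrier_mat (Suc r) (Suc r)"
      using mult_carrier_mat[OF Kmat_carrier C] .
    hence KCt: "transpose_mat (Kmat (Suc r) (Suc r) * C) \<in> carrier_mat (Suc r) (Suc r)" by simp
    show ?thesis
      unfolding index_mult_mat_vec_sum[OF KCt x that]
      using that B C by (simp add: border_row_def mult.commute Kmat_dim)
  qed
  have "A = border_row B x * Kmat (Suc r) (Suc r) * C \<longleftrightarrow>
      (\<forall>i<r. \<forall>j<Suc r. A $$ (i,j) = (\<Sum>l<r. B $$ (i,l) * (Kmat r (Suc r) * C) $$ (l,j)))
      \<and> (\<forall>j<Suc r. A $$ (r,j) = (transpose_mat (Kmat (Suc r) (Suc r) * C) *\<^sub>v x) $ j)"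
    unfolding eq_mult_Kmat_iff[OF A bB C] using top bottom by (auto simp: less_Suc_eq)
  also have "\<dots> \<longleftrightarrow> take_rows r A = B * Kmat r (Suc r) * C
      \<and> transpose_mat (Kmat (Suc r) (Suc r) * C) *\<^sub>v x = row A r"
    unfolding eq_mult_Kmat_iff[OF At B C] using A C by (auto simp: take_rows_def vec_eq_iff)
  finally show ?thesis
    using B by (auto simp: modified_LU_def lower_triangular_border_row_iff border_row_carrier)
qed

definition border_col :: "'a::zero mat \<Rightarrow> 'a vec \<Rightarrow> 'a mat" where
  "border_col C y = mat (Suc (dim_row C)) (Suc (dim_row C))
     (\<lambda>(i,j). if j < dim_row C then if i < dim_row C then C $$ (i,j) else 0
              else if i = 0 then 0 else y $ (i - 1))"

lemma border_col_carrier: "C \<in> carrier_mat r r \<Longrightarrow> border_col C y \<in> carrier_mat (Suc r) (Suc r)"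
  by (simp add: border_col_def)

lemma upper_triangular_border_col_iff:
  "C \<in> carrier_mat r r \<Longrightarrow> upper_triangular (border_col C y) \<longleftrightarrow> upper_triangular C"
  by (auto simp: upper_triangular_def border_col_def)

lemma border_col_lead_sub_col:
  assumes "C \<in> carrier_mat (Suc r) (Suc r)" and "upper_triangular C" and "C $$ (0,r) = 0"
  shows "border_col (lead_sub C r) (vec r (\<lambda>p. C $$ (Suc p, r))) = C"
  using assms by (intro eq_matI) (auto simp: border_col_def lead_sub_def less_Suc_eq)

lemma Kmat_mult_border_col_index:
  fixes C :: "'a::semiring_1 mat"
  assumes C: "C \<in> carrier_mat r r" and y: "y \<in> carrier_vec r" and l: "l < r" and j: "j < Suc r"
  shows "(Kmat r (Suc r) * border_col C y) $$ (l,j) =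
    (if j < r then (Kmat r r * C) $$ (l,j) else (lower_bidiag r *\<^sub>v y) $ l)"
  using assms border_col_carrier[OF C, of y]
  by (cases l) (auto simp: Kmat_mult_index lower_bidiag_mult_vec_index border_col_def add.commute)

lemma modified_LU_border_col_iff:
  fixes A :: "'a::comm_ring_1 mat"
  assumes r: "1 \<le> r" and A: "A \<in> carrier_mat r (Suc r)" and C: "C \<in> carrier_mat r r"
    and y: "y \<in> carrier_vec r"
  shows "modified_LU r (Suc r) A B (border_col C y) \<longleftrightarrow>
    modified_LU r r (lead_sub A r) B C \<and> B * lower_bidiag r *\<^sub>v y = col A r"
proof (cases "B \<in> carrier_mat r r")
  case False thus ?thesis by (simp add: modified_LU_def)
next
  case B: True
  have Al: "lead_sub A r \<in> carrier_mat r r" by (simp add: lead_sub_def)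
  have bC: "border_col C y \<in> carrier_mat (Suc r) (Suc r)" using border_col_carrier[OF C] .
  have BL: "B * lower_bidiag r \<in> carrier_mat r r" using mult_carrier_mat[OF B lower_bidiag_carrier] .
  have Ly: "lower_bidiag r *\<^sub>v y \<in> carrier_vec r" using mult_mat_vec_carrier[OF lower_bidiag_carrier y] .
  have last_col: "(\<Sum>l<r. B $$ (i,l) * (lower_bidiag r *\<^sub>v y) $ l) = (B * lower_bidiag r *\<^sub>v y) $ i"
    if "i < r" for i
    using index_mult_mat_vec_sum[OF B Ly that] assoc_mult_mat_vec[OF B lower_bidiag_carrier y] by simp
  have "A = B * Kmat r (Suc r) * border_col C y \<longleftrightarrow>
      (\<forall>i<r. \<forall>j<r. A $$ (i,j) = (\<Sum>l<r. B $$ (i,l) * (Kmat r r * C) $$ (l,j)))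
      \<and> (\<forall>i<r. A $$ (i,r) = (B * lower_bidiag r *\<^sub>v y) $ i)"
    unfolding eq_mult_Kmat_iff[OF A B bC]
    by (auto simp: Kmat_mult_border_col_index[OF C y] last_col less_Suc_eq)
  also have "\<dots> \<longleftrightarrow> lead_sub A r = B * Kmat r r * C \<and> B * lower_bidiag r *\<^sub>v y = col A r"
    unfolding eq_mult_Kmat_iff[OF Al B C] using A BL by (auto simp: lead_sub_def vec_eq_iff)
  finally have eq: "A = B * Kmat r (Suc r) * border_col C y \<longleftrightarrow>
    lead_sub A r = B * Kmat r r * C \<and> B * lower_bidiag r *\<^sub>v y = col A r" .
  have corner: "border_col C y $$ (0,0) = C $$ (0,0)" using C r by (simp add: border_col_def)
  have first_row: "(\<forall>j\<in>{1..<Suc r}. border_col C y $$ (0,j) = 0) \<longleftrightarrow> (\<forall>j\<in>{1..<r}. C $$ (0,j) = 0)"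
    using C r by (auto simp: border_col_def)
  show ?thesis
    unfolding modified_LU_def eq corner first_row upper_triangular_border_col_iff[OF C]
    using B C bC by auto
qed

section \<open>Existence and uniqueness by induction\<close>

lemma det_upper_factor_nonzero:
  fixes A :: "'a::comm_ring_1 mat"
  assumes "leading_minors_nonzero r (Suc r) A" and "modified_LU r (Suc r) A B C"
  shows "det C \<noteq> 0"
  using det_drop_first_col_nonzero[OF assms(1)] det_drop_first_col_modified_LU[OF assms(2)] by auto

lemma det_lower_factor_nonzero:
  fixes A :: "'a::comm_ring_1 mat"
  assumes "leading_minors_nonzero r r A" and "1 \<le> r" and "modified_LU r r A B C"
  shows "det B \<noteq> 0"
proof -
  have "det (lead_sub A r) \<noteq> 0" and A: "A \<in> carrier_mat r r"
    using assms(1,2) by (auto simp: leading_minors_nonzero_def)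
  hence "det A \<noteq> 0" using lead_sub_id[OF A] by simp
  thus ?thesis using det_modified_LU_square[OF assms(3)] by auto
qed

lemma unique_modified_LU_add_row:
  fixes A :: "'a::field mat"
  assumes IH: "\<And>A' :: 'a mat. leading_minors_nonzero r (Suc r) A' \<Longrightarrow> unique_modified_LU r (Suc r) A'"
    and hA: "leading_minors_nonzero (Suc r) (Suc r) A"
  shows "unique_modified_LU (Suc r) (Suc r) A"
proof -
  have A: "A \<in> carrier_mat (Suc r) (Suc r)" using hA by (simp add: leading_minors_nonzero_def)
  note hAt = leading_minors_nonzero_take_rows[OF hA]
  obtain B C where s: "modified_LU r (Suc r) (take_rows r A) B C"
    and uniq: "\<And>B' C'. modified_LU r (Suc r) (take_rows r A) B' C' \<Longrightarrow> B' = B \<and> C' = C"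
    by (rule unique_modified_LUE[OF IH[OF hAt]]) (rule that)
  have B: "B \<in> carrier_mat r r" and C: "C \<in> carrier_mat (Suc r) (Suc r)"
    using s by (auto simp: modified_LU_def)
  define T where "T = transpose_mat (Kmat (Suc r) (Suc r) * C)"
  have KC: "Kmat (Suc r) (Suc r) * C \<in> carrier_mat (Suc r) (Suc r)"
    using mult_carrier_mat[OF Kmat_carrier C] .
  hence T: "T \<in> carrier_mat (Suc r) (Suc r)" by (simp add: T_def)
  have "det T \<noteq> 0"
    using det_transpose[OF KC] det_Kmat_mult[OF C] det_upper_factor_nonzero[OF hAt s]
    by (simp add: T_def)
  moreover have "row A r \<in> carrier_vec (Suc r)" using row_carrier[of A r] carrier_matD[OF A] by simp
  ultimately obtain x where x: "x \<in> carrier_vec (Suc r)" "T *\<^sub>v x = row A r"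
    and uniq_x: "\<And>x'. x' \<in> carrier_vec (Suc r) \<Longrightarrow> T *\<^sub>v x' = row A r \<Longrightarrow> x' = x"
    by (rule mult_mat_vec_unique_solution[OF T]) (rule that)
  show ?thesis
    unfolding unique_modified_LU_def
  proof (intro exI conjI allI impI)
    show "modified_LU (Suc r) (Suc r) A (border_row B x) C"
      using modified_LU_border_row_iff[OF A B x(1)] s x(2) by (simp add: T_def)
  next
    fix B' C' assume s': "modified_LU (Suc r) (Suc r) A B' C'"
    hence B': "B' \<in> carrier_mat (Suc r) (Suc r)" "lower_triangular B'"
      by (auto simp: modified_LU_def)
    have B'_eq: "border_row (lead_sub B' r) (row B' r) = B'"
      using border_row_lead_sub_row[OF B'] .
    have Bl: "lead_sub B' r \<in> carrier_mat r r" by (simp add: lead_sub_def)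
    have rB': "row B' r \<in> carrier_vec (Suc r)" using row_carrier[of B' r] carrier_matD[OF B'(1)] by simp
    have s'_top: "modified_LU r (Suc r) (take_rows r A) (lead_sub B' r) C'"
      and s'_row: "transpose_mat (Kmat (Suc r) (Suc r) * C') *\<^sub>v row B' r = row A r"
      using modified_LU_border_row_iff[OF A Bl rB', of C'] s' B'_eq by simp_all
    from uniq[OF s'_top] have "lead_sub B' r = B" "C' = C" by auto
    moreover have "row B' r = x"
      using rB' s'_row \<open>C' = C\<close> by (intro uniq_x) (simp_all add: T_def)
    ultimately show "B' = border_row B x" "C' = C" using B'_eq by auto
  qed
qed

lemma unique_modified_LU_add_col:
  fixes A :: "'a::field mat"
  assumes IH: "\<And>A' :: 'a mat. leading_minors_nonzero r r A' \<Longrightarrow> unique_modified_LU r r A'"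
    and r: "1 \<le> r" and hA: "leading_minors_nonzero r (Suc r) A"
  shows "unique_modified_LU r (Suc r) A"
proof -
  have A: "A \<in> carrier_mat r (Suc r)" using hA by (simp add: leading_minors_nonzero_def)
  note hAl = leading_minors_nonzero_lead_sub[OF hA]
  obtain B C where s: "modified_LU r r (lead_sub A r) B C"
    and uniq: "\<And>B' C'. modified_LU r r (lead_sub A r) B' C' \<Longrightarrow> B' = B \<and> C' = C"
    by (rule unique_modified_LUE[OF IH[OF hAl]]) (rule that)
  have B: "B \<in> carrier_mat r r" and C: "C \<in> carrier_mat r r"
    using s by (auto simp: modified_LU_def)
  define M where "M = B * lower_bidiag r"
  have M: "M \<in> carrier_mat r r" using mult_carrier_mat[OF B lower_bidiag_carrier] by (simp add: M_def)
  have "det M \<noteq> 0"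
    using det_mult[OF B lower_bidiag_carrier] det_lower_factor_nonzero[OF hAl r s]
    by (simp add: M_def det_lower_bidiag)
  moreover have "col A r \<in> carrier_vec r" using col_dim[of A r] carrier_matD[OF A] by simp
  ultimately obtain y where y: "y \<in> carrier_vec r" "M *\<^sub>v y = col A r"
    and uniq_y: "\<And>y'. y' \<in> carrier_vec r \<Longrightarrow> M *\<^sub>v y' = col A r \<Longrightarrow> y' = y"
    by (rule mult_mat_vec_unique_solution[OF M]) (rule that)
  show ?thesis
    unfolding unique_modified_LU_def
  proof (intro exI conjI allI impI)
    show "modified_LU r (Suc r) A B (border_col C y)"
      using modified_LU_border_col_iff[OF r A C y(1)] s y(2) by (simp add: M_def)
  next
    fix B' C' assume s': "modified_LU r (Suc r) A B' C'"
    hence C': "C' \<in> carrier_mat (Suc r) (Suc r)" "upper_triangular C'" "C' $$ (0,r) = 0"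
      using r by (auto simp: modified_LU_def)
    define y' where "y' = vec r (\<lambda>p. C' $$ (Suc p, r))"
    have C'_eq: "border_col (lead_sub C' r) y' = C'"
      unfolding y'_def using border_col_lead_sub_col[OF C'] .
    have Cl: "lead_sub C' r \<in> carrier_mat r r" by (simp add: lead_sub_def)
    have y': "y' \<in> carrier_vec r" by (simp add: y'_def)
    have s'_left: "modified_LU r r (lead_sub A r) B' (lead_sub C' r)"
      and s'_col: "B' * lower_bidiag r *\<^sub>v y' = col A r"
      using modified_LU_border_col_iff[OF r A Cl y', of B'] s' C'_eq by simp_all
    from uniq[OF s'_left] have "B' = B" "lead_sub C' r = C" by auto
    moreover have "y' = y"
      using y' s'_col \<open>B' = B\<close> by (intro uniq_y) (simp_all add: M_def)
    ultimately show "B' = B" "C' = border_col C y" using C'_eq by auto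
  qed
qed

lemma unique_modified_LU_empty:
  fixes A :: "'a::semiring_1 mat"
  assumes "A \<in> carrier_mat 0 1"
  shows "unique_modified_LU 0 1 A"
  unfolding unique_modified_LU_def
proof (intro exI conjI allI impI)
  show "modified_LU 0 1 A (1\<^sub>m 0) (1\<^sub>m 1)"
    using assms by (auto simp: modified_LU_def lower_triangular_def)
  fix B C assume "modified_LU 0 1 A B C"
  thus "B = 1\<^sub>m 0" "C = 1\<^sub>m 1" by (auto simp: modified_LU_def)
qed

lemma unique_modified_LU_rectangular:
  fixes A :: "'a::field mat"
  shows "leading_minors_nonzero r (Suc r) A \<Longrightarrow> unique_modified_LU r (Suc r) A"
proof (induction r arbitrary: A)
  case 0
  thus ?case using unique_modified_LU_empty[of A] by (simp add: leading_minors_nonzero_def)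
next
  case (Suc r)
  have row: "unique_modified_LU (Suc r) (Suc r) A'" if "leading_minors_nonzero (Suc r) (Suc r) A'"
    for A' :: "'a mat"
    using unique_modified_LU_add_row[OF Suc.IH that] .
  have r1: "(1::nat) \<le> Suc r" by simp
  show ?case using unique_modified_LU_add_col[OF row r1 Suc.prems] .
qed

corollary modified_LU_square:
  fixes A :: "'a::field mat"
  assumes "1 \<le> m" and "leading_minors_nonzero m m A"
  shows "\<exists>!BC. case BC of (B, C) \<Rightarrow> modified_LU m m A B C"
proof -
  obtain r where m: "m = Suc r" using assms(1) by (cases m) auto
  show ?thesis
    using unique_modified_LU_add_row[OF unique_modified_LU_rectangular assms(2)[unfolded m]]
    by (simp add: m unique_modified_LU_iff_ex1)
qed

corollary modified_LU_rectangular: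
  fixes A :: "'a::field mat"
  assumes "1 \<le> m" and "leading_minors_nonzero (m - 1) m A"
  shows "\<exists>!BC. case BC of (B, C) \<Rightarrow> modified_LU (m - 1) m A B C"
proof -
  obtain r where m: "m = Suc r" using assms(1) by (cases m) auto
  show ?thesis
    using unique_modified_LU_rectangular[of r A] assms(2)
    by (simp add: m unique_modified_LU_iff_ex1)
qed

theorem theorem7p2:
  shows
  "(\<forall>(m::nat) (A::complex mat).
      1 \<le> m \<and> A \<in> carrier_mat m m
      \<and> (\<forall>k\<in>{1..m}. det (lead_sub A k) \<noteq> 0)
      \<and> (\<forall>k\<in>{1..m-1}. det (lead_sub (drop_first_col A) k) \<noteq> 0)
      \<longrightarrow> (\<exists>!BC. case BC of (B, C) \<Rightarrow>
             B \<in> carrier_mat m m \<and> lower_triangular B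
           \<and> C \<in> carrier_mat m m \<and> upper_triangular C
           \<and> C $$ (0,0) = 1 \<and> (\<forall>j\<in>{1..<m}. C $$ (0,j) = 0)
           \<and> A = B * Kmat m m * C))
   \<and>
   (\<forall>(m::nat) (A::complex mat).
      1 \<le> m \<and> A \<in> carrier_mat (m-1) m
      \<and> (\<forall>k\<in>{1..m-1}. det (lead_sub A k) \<noteq> 0)
      \<and> (\<forall>k\<in>{1..m-1}. det (lead_sub (drop_first_col A) k) \<noteq> 0)
      \<longrightarrow> (\<exists>!BC. case BC of (B, C) \<Rightarrow>
             B \<in> carrier_mat (m-1) (m-1) \<and> lower_triangular B
           \<and> C \<in> carrier_mat m m \<and> upper_triangular C
           \<and> C $$ (0,0) = 1 \<and> (\<forall>j\<in>{1..<m}. C $$ (0,j) = 0)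
           \<and> A = B * Kmat (m-1) m * C))"
proof (intro conjI allI impI, goal_cases)
  case (1 m A)
  show ?case
    by (rule modified_LU_square[unfolded modified_LU_def]) (use 1 in \<open>auto simp: leading_minors_nonzero_def\<close>)
next
  case (2 m A)
  show ?case
    by (rule modified_LU_rectangular[unfolded modified_LU_def]) (use 2 in \<open>auto simp: leading_minors_nonzero_def\<close>)
qed

end
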